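(* Let $\langle S,L,\tau,\ell\rangle$ be a labelled Markov chain and let $R$ be a bisimulation with $\simeq\,\subseteq R\subseteq\,\sim$. For all $s,t,u\in S$ with $(s,t)\in\mathrm{Filter}(R)$ and $(t,u)\in\mathrm{Filter}(R)$, if $s\simeq t$ or $t\simeq u$, then $(s,u)\in\mathrm{Filter}(R)$.
   Context: Labelled Markov chain $\langle S,L,\tau,\ell\rangle$: finite $S$, finite $L$, $\tau:S\to\mathcal{D}(S)$, $\ell:S\to L$, $|\ell(S)|\ge2$. $\Omega(\mu,\nu)$ = couplings (distributions on $S\times S$ with marginals $\mu,\nu$). A bisimulation is an equivalence relation $R\subseteq S\times S$ such that for all $(s,t)\in R$, $\ell(s)=\ell(t)$ and some $\omega\in\Omega(\tau(s),\tau(t))$ has $\mathrm{support}(\omega)\subseteq R$; $\sim$ is bisimilarity (union of all bisimulations). $S^2_\Delta=\{(s,s)\}$, $S^2_1=\{(s,t)\mid\ell(s)\ne\ell(t)\}$. A policy is $P:S\times S\to\mathcal{D}(S\times S)$ with $P(s,t)\in\Omega(\tau(s),\tau(t))$ for $(s,t)\notin S^2_1$ and $P(s,t)$ the point mass at $(s,t)$ for $(s,t)\in S^2_1$; $\mathcal{P}$ = set of policies, inducing Markov chains $\langle S\times S,P\rangle$. Robust bisimilarity: $s\simeq t$ iff some $P\in\mathcal{P}$ makes $(s,t)$ reach $S^2_\Delta$ with probability $1$ in $\langle S\times S,P\rangle$. $R$ supports a path $(u_1,v_1)\dots(u_n,v_n)$ of $\langle S\times S,P\rangle$ if $(u_i,v_i)\in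 R$ and $\mathrm{support}(P(u_i,v_i))\subseteq R$ for all $i$. $\mathrm{Filter}(R)=\{(s,t)\in R\mid\exists P\in\mathcal{P}$ such that $R$ supports a path from $(s,t)$ to $S^2_\Delta$ in $\langle S\times S,P\rangle\}$. *)

theory Defs
  imports "HOL-Probability.Probability"
begin

definition couplings :: "'s pmf \<Rightarrow> 's pmf \<Rightarrow> ('s \<times> 's) pmf set" where
  "couplings \<mu> \<nu> = {\<omega>. map_pmf fst \<omega> = \<mu> \<and> map_pmf snd \<omega> = \<nu>}"

definition bisimulation :: "('s \<Rightarrow> 's pmf) \<Rightarrow> ('s \<Rightarrow> 'l) \<Rightarrow> ('s \<times> 's) set \<Rightarrow> bool" where
  "bisimulation \<tau> lab R \<longleftrightarrow> equiv UNIV R \<and>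
     (\<forall>(s,t)\<in>R. lab s = lab t \<and> (\<exists>\<omega>\<in>couplings (\<tau> s) (\<tau> t). set_pmf \<omega> \<subseteq> R))"

definition bisimilarity :: "('s \<Rightarrow> 's pmf) \<Rightarrow> ('s \<Rightarrow> 'l) \<Rightarrow> ('s \<times> 's) set" where
  "bisimilarity \<tau> lab = \<Union>{R. bisimulation \<tau> lab R}"

definition diag_pairs :: "('s \<times> 's) set" where
  "diag_pairs = {(s,s) | s. True}"

definition diff_label :: "('s \<Rightarrow> 'l) \<Rightarrow> ('s \<times> 's) set" where
  "diff_label lab = {(s,t). lab s \<noteq> lab t}"

definition policies :: "('s \<Rightarrow> 's pmf) \<Rightarrow> ('s \<Rightarrow> 'l) \<Rightarrow> (('s \<times> 's) \<Rightarrow> ('s \<times> 's) pmf) set" where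
  "policies \<tau> lab = {P. \<forall>st.
      (st \<notin> diff_label lab \<longrightarrow> P st \<in> couplings (\<tau> (fst st)) (\<tau> (snd st))) \<and>
      (st \<in> diff_label lab \<longrightarrow> P st = return_pmf st)}"

primrec reach_within :: "('a \<Rightarrow> 'a pmf) \<Rightarrow> 'a set \<Rightarrow> nat \<Rightarrow> 'a \<Rightarrow> real" where
  "reach_within P T 0 z = (if z \<in> T then 1 else 0)"
| "reach_within P T (Suc n) z =
     (if z \<in> T then 1 else measure_pmf.expectation (P z) (reach_within P T n))"

text \<open>Reaching T with probability 1 (probability of eventually reaching T is the limit
  of the probabilities of reaching T within n steps).\<close>
definition reaches_almost_surely :: "('a \<Rightarrow> 'a pmf) \<Rightarrow> 'a set \<Rightarrow> 'a \<Rightarrow> bool" where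
  "reaches_almost_surely P T z \<longleftrightarrow> (\<lambda>n. reach_within P T n z) \<longlonglongrightarrow> 1"

definition robust_bisimilarity :: "('s \<Rightarrow> 's pmf) \<Rightarrow> ('s \<Rightarrow> 'l) \<Rightarrow> ('s \<times> 's) set" where
  "robust_bisimilarity \<tau> lab =
     {(s,t). \<exists>P\<in>policies \<tau> lab. reaches_almost_surely P diag_pairs (s,t)}"

definition is_path :: "('a \<Rightarrow> 'a pmf) \<Rightarrow> 'a list \<Rightarrow> bool" where
  "is_path P xs \<longleftrightarrow> xs \<noteq> [] \<and> (\<forall>i. Suc i < length xs \<longrightarrow> xs ! Suc i \<in> set_pmf (P (xs ! i)))"

definition supports_path :: "'a set \<Rightarrow> ('a \<Rightarrow> 'a pmf) \<Rightarrow> 'a list \<Rightarrow> bool" where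
  "supports_path R P xs \<longleftrightarrow> (\<forall>x\<in>set xs. x \<in> R \<and> set_pmf (P x) \<subseteq> R)"

definition filter_rel :: "('s \<Rightarrow> 's pmf) \<Rightarrow> ('s \<Rightarrow> 'l) \<Rightarrow> ('s \<times> 's) set \<Rightarrow> ('s \<times> 's) set" where
  "filter_rel \<tau> lab R = {(s,t) \<in> R. \<exists>P\<in>policies \<tau> lab. \<exists>xs.
      is_path P xs \<and> hd xs = (s,t) \<and> last xs \<in> diag_pairs \<and> supports_path R P xs}"

end

(*
  Filter(R) is characterised inductively: it is the least set that contains the diagonal and
  contains every pair of R whose successor distributions admit a coupling supported in R that
  charges a pair already in the set. A witnessing policy is obtained by redefining one policy
  along the path, which is possible because a path revisiting a pair can be shortened.
  Robust bisimilarity lies in this set, as the successors of a pair reaching the diagonal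
  almost surely again reach it almost surely.

  If s and t are robustly bisimilar via a policy P and (t, u) enters the set through a coupling
  w, then gluing P(s, t) and w along their common marginal tau t yields a coupling of tau s and
  tau u supported in (robust bisimilarity) O R, a subset of R; induction on (t, u) thus gives
  (s, u) in Filter(R). The case of t and u robustly bisimilar follows by symmetry.
*)
theory Submission
  imports Defs
begin

lemma is_path_Cons:
  "is_path P (x # xs) \<longleftrightarrow> xs = [] \<or> hd xs \<in> set_pmf (P x) \<and> is_path P xs"
  by (cases xs) (auto simp: is_path_def nth_Cons split: nat.splits)

lemma is_path_drop:
  assumes "is_path P xs" and "i < length xs"
  shows "is_path P (drop i xs)"
  using assms by (auto simp: is_path_def)

lemma is_path_cong:
  assumes "\<And>z. z \<in> set xs \<Longrightarrow> P' z = P z"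
  shows "is_path P' xs \<longleftrightarrow> is_path P xs"
  using assms unfolding is_path_def by (auto simp: nth_mem)

lemma supports_path_cong:
  assumes "\<And>z. z \<in> set xs \<Longrightarrow> P' z = P z"
  shows "supports_path R P' xs \<longleftrightarrow> supports_path R P xs"
  using assms unfolding supports_path_def by auto

lemma set_pmf_couplings:
  assumes "\<omega> \<in> couplings \<mu> \<nu>"
  shows "set_pmf \<mu> = fst ` set_pmf \<omega>" and "set_pmf \<nu> = snd ` set_pmf \<omega>"
proof -
  from assms have "\<mu> = map_pmf fst \<omega>" and "\<nu> = map_pmf snd \<omega>"
    by (simp_all add: couplings_def)
  then show "set_pmf \<mu> = fst ` set_pmf \<omega>" and "set_pmf \<nu> = snd ` set_pmf \<omega>"
    by simp_all
qed

lemma diagonal_coupling: "map_pmf (\<lambda>a. (a, a)) \<mu> \<in> couplings \<mu> \<mu>"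
  by (simp add: couplings_def pmf.map_comp comp_def)

lemma swap_coupling:
  assumes "\<omega> \<in> couplings \<mu> \<nu>"
  shows "map_pmf prod.swap \<omega> \<in> couplings \<nu> \<mu>"
  using assms by (simp add: couplings_def pmf.map_comp comp_def)

lemma couplings_relcomp:
  assumes \<omega>\<^sub>1: "\<omega>\<^sub>1 \<in> couplings \<mu> \<nu>" and \<omega>\<^sub>2: "\<omega>\<^sub>2 \<in> couplings \<nu> \<rho>"
  obtains \<omega> where "\<omega> \<in> couplings \<mu> \<rho>" and "set_pmf \<omega> = set_pmf \<omega>\<^sub>1 O set_pmf \<omega>\<^sub>2"
proof
  define fibre where "fibre b = cond_pmf \<omega>\<^sub>2 {bc. fst bc = b}" for b
  define \<omega> where "\<omega> = bind_pmf \<omega>\<^sub>1 (\<lambda>ab. map_pmf (\<lambda>bc. (fst ab, snd bc)) (fibre (snd ab)))"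
  have fibre_ne: "set_pmf \<omega>\<^sub>2 \<inter> {bc. fst bc = b} \<noteq> {}" if "b \<in> set_pmf \<nu>" for b
    using that set_pmf_couplings(1)[OF \<omega>\<^sub>2] by auto
  have set_fibre: "set_pmf (fibre b) = set_pmf \<omega>\<^sub>2 \<inter> {bc. fst bc = b}" if "b \<in> set_pmf \<nu>" for b
    using fibre_ne[OF that] by (simp add: fibre_def)
  have snd_in: "snd ab \<in> set_pmf \<nu>" if "ab \<in> set_pmf \<omega>\<^sub>1" for ab
    using that set_pmf_couplings(2)[OF \<omega>\<^sub>1] by auto
  show "set_pmf \<omega> = set_pmf \<omega>\<^sub>1 O set_pmf \<omega>\<^sub>2"
  proof (intro set_eqI iffI)
    fix ac assume "ac \<in> set_pmf \<omega>"
    then obtain ab bc where "ab \<in> set_pmf \<omega>\<^sub>1" "bc \<in> set_pmf (fibre (snd ab))" "ac = (fst ab, snd bc)"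
      by (auto simp: \<omega>_def)
    then show "ac \<in> set_pmf \<omega>\<^sub>1 O set_pmf \<omega>\<^sub>2"
      using set_fibre snd_in by (cases ab, cases bc) auto
  next
    fix ac assume "ac \<in> set_pmf \<omega>\<^sub>1 O set_pmf \<omega>\<^sub>2"
    then obtain a b c where "ac = (a, c)" "(a, b) \<in> set_pmf \<omega>\<^sub>1" "(b, c) \<in> set_pmf \<omega>\<^sub>2"
      by blast
    then show "ac \<in> set_pmf \<omega>"
      using set_fibre snd_in unfolding \<omega>_def by (force simp: set_bind_pmf)
  qed
  have "map_pmf fst \<omega> = \<mu>"
    using \<omega>\<^sub>1
    by (simp add: \<omega>_def couplings_def map_bind_pmf map_pmf_comp bind_return_pmf' map_pmf_def[symmetric])
  moreover have "map_pmf snd \<omega> = \<rho>"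
  proof -
    have "\<nu> = map_pmf snd \<omega>\<^sub>1" using \<omega>\<^sub>1 by (simp add: couplings_def)
    then have "map_pmf snd \<omega> = map_pmf snd (bind_pmf \<nu> fibre)"
      by (simp add: \<omega>_def map_bind_pmf map_pmf_comp bind_map_pmf)
    also have "bind_pmf \<nu> fibre = \<omega>\<^sub>2"
      using \<omega>\<^sub>2 unfolding fibre_def couplings_def
      by (subst bind_cond_pmf_cancel) (auto simp: vimage_def eq_commute)
    finally show ?thesis using \<omega>\<^sub>2 by (simp add: couplings_def)
  qed
  ultimately show "\<omega> \<in> couplings \<mu> \<rho>" by (simp add: couplings_def)
qed

lemma reach_within_Suc_outside:
  fixes P :: "'a::finite \<Rightarrow> 'a pmf"
  assumes "x \<notin> T"
  shows "reach_within P T (Suc n) x = (\<Sum>a\<in>UNIV. reach_within P T n a * pmf (P x) a)"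
  using assms by (simp add: integral_measure_pmf_real[where A = UNIV])

lemma reach_within_bounds:
  fixes P :: "'a::finite \<Rightarrow> 'a pmf"
  shows "0 \<le> reach_within P T n x" and "reach_within P T n x \<le> 1"
proof (induction n arbitrary: x)
  case (Suc n)
  case 1 show ?case
    using Suc.IH by (cases "x \<in> T") (auto simp: reach_within_Suc_outside intro: sum_nonneg)
  case 2 show ?case
  proof (cases "x \<in> T")
    case False
    have "(\<Sum>a\<in>UNIV. reach_within P T n a * pmf (P x) a) \<le> (\<Sum>a\<in>UNIV. pmf (P x) a)"
      using Suc.IH by (intro sum_mono mult_left_le_one_le) auto
    also have "\<dots> = 1" by (rule sum_pmf_eq_1) auto
    finally show ?thesis using False by (simp add: reach_within_Suc_outside del: reach_within.simps)
  qed simp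
qed simp_all

lemma reaches_almost_surely_successor:
  fixes P :: "'a::finite \<Rightarrow> 'a pmf"
  assumes x: "reaches_almost_surely P T x" and "x \<notin> T" and y: "y \<in> set_pmf (P x)"
  shows "reaches_almost_surely P T y"
proof -
  let ?r = "\<lambda>n. reach_within P T n"
  have p: "pmf (P x) y > 0" using y by (simp add: pmf_positive_iff)
  have miss: "1 - ?r n y \<le> (1 - ?r (Suc n) x) / pmf (P x) y" for n
  proof -
    have "(1 - ?r n y) * pmf (P x) y \<le> (\<Sum>a\<in>UNIV. (1 - ?r n a) * pmf (P x) a)"
      by (rule member_le_sum) (auto simp: reach_within_bounds)
    also have "\<dots> = (\<Sum>a\<in>UNIV. pmf (P x) a) - (\<Sum>a\<in>UNIV. ?r n a * pmf (P x) a)"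
      by (simp add: algebra_simps sum_subtractf)
    also have "\<dots> = 1 - ?r (Suc n) x"
      using \<open>x \<notin> T\<close> by (simp add: reach_within_Suc_outside sum_pmf_eq_1 del: reach_within.simps)
    finally show ?thesis using p by (simp add: field_simps)
  qed
  have "(\<lambda>n. ?r (Suc n) x) \<longlonglongrightarrow> 1"
    using x unfolding reaches_almost_surely_def by (rule LIMSEQ_Suc)
  then have "(\<lambda>n. (1 - ?r (Suc n) x) / pmf (P x) y) \<longlonglongrightarrow> (1 - 1) / pmf (P x) y"
    using p by (intro tendsto_intros) auto
  then have bound_to_0: "(\<lambda>n. (1 - ?r (Suc n) x) / pmf (P x) y) \<longlonglongrightarrow> 0"
    by simp
  have "(\<lambda>n. 1 - ?r n y) \<longlonglongrightarrow> 0"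
  proof (rule tendsto_sandwich[OF _ _ tendsto_const bound_to_0])
    show "\<forall>\<^sub>F n in sequentially. 0 \<le> 1 - ?r n y" by (simp add: reach_within_bounds)
    show "\<forall>\<^sub>F n in sequentially. 1 - ?r n y \<le> (1 - ?r (Suc n) x) / pmf (P x) y"
      using miss by simp
  qed
  then have "(\<lambda>n. 1 - (1 - ?r n y)) \<longlonglongrightarrow> 1 - 0"
    by (intro tendsto_intros)
  then show ?thesis by (simp add: reaches_almost_surely_def)
qed

lemma reach_within_Suc_pos_successor:
  fixes P :: "'a::finite \<Rightarrow> 'a pmf"
  assumes "reach_within P T (Suc n) x > 0" and "x \<notin> T"
  obtains y where "y \<in> set_pmf (P x)" and "reach_within P T n y > 0"
proof -
  have "\<exists>y. 0 < reach_within P T n y * pmf (P x) y"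
  proof (rule ccontr)
    assume "\<nexists>y. 0 < reach_within P T n y * pmf (P x) y"
    then have "(\<Sum>a\<in>UNIV. reach_within P T n a * pmf (P x) a) \<le> 0"
      by (intro sum_nonpos) (simp add: not_less)
    with assms show False
      by (simp add: reach_within_Suc_outside del: reach_within.simps)
  qed
  then obtain y where y: "0 < reach_within P T n y * pmf (P x) y" ..
  show ?thesis
  proof (rule that)
    from y have "pmf (P x) y \<noteq> 0" and "reach_within P T n y \<noteq> 0" by fastforce+
    then show "y \<in> set_pmf (P x)" and "reach_within P T n y > 0"
      using reach_within_bounds(1)[of P T n y] by (simp_all add: set_pmf_iff)
  qed
qed

lemma reaches_almost_surely_induct[consumes 1, case_names target step]:
  fixes P :: "'a::finite \<Rightarrow> 'a pmf"
  assumes "reaches_almost_surely P T x"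
    and target: "\<And>z. z \<in> T \<Longrightarrow> Q z"
    and step: "\<And>z y. reaches_almost_surely P T z \<Longrightarrow> z \<notin> T \<Longrightarrow> y \<in> set_pmf (P z) \<Longrightarrow>
      Q y \<Longrightarrow> Q z"
  shows "Q x"
proof -
  have "eventually (\<lambda>n. reach_within P T n x > 0) sequentially"
    using assms(1) unfolding reaches_almost_surely_def by (rule order_tendstoD) simp
  then obtain n where "reach_within P T n x > 0"
    by (auto simp: eventually_sequentially)
  with assms(1) show ?thesis
  proof (induction n arbitrary: x)
    case 0
    then show ?case by (auto intro: target split: if_splits)
  next
    case (Suc n)
    show ?case
    proof (cases "x \<in> T")
      case False
      obtain y where "y \<in> set_pmf (P x)" "reach_within P T n y > 0"
        using reach_within_Suc_pos_successor[OF Suc.prems(2) False] .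
      then show ?thesis
        using Suc reaches_almost_surely_successor[OF Suc.prems(1) False] step False by blast
    qed (rule target)
  qed
qed

lemma policy_coupling:
  assumes "P \<in> policies \<tau> lab" and "(s, t) \<notin> diff_label lab"
  shows "P (s, t) \<in> couplings (\<tau> s) (\<tau> t)"
  using assms unfolding policies_def by fastforce

lemma policy_update:
  assumes "P \<in> policies \<tau> lab" and "(s, t) \<notin> diff_label lab" and "\<omega> \<in> couplings (\<tau> s) (\<tau> t)"
  shows "P((s, t) := \<omega>) \<in> policies \<tau> lab"
  using assms unfolding policies_def by auto

lemma policies_nonempty: "\<exists>P. P \<in> policies \<tau> lab"
proof
  show "(\<lambda>x. if x \<in> diff_label lab then return_pmf x else pair_pmf (\<tau> (fst x)) (\<tau> (snd x)))
      \<in> policies \<tau> lab"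
    by (simp add: policies_def couplings_def map_fst_pair_pmf map_snd_pair_pmf)
qed

lemma swap_policy:
  assumes "P \<in> policies \<tau> lab"
  shows "(\<lambda>x. map_pmf prod.swap (P (prod.swap x))) \<in> policies \<tau> lab"
proof -
  have "P (prod.swap x) \<in> couplings (\<tau> (snd x)) (\<tau> (fst x))" if "x \<notin> diff_label lab" for x
    using policy_coupling[OF assms, of "snd x" "fst x"] that by (cases x) (auto simp: diff_label_def)
  moreover have "P (prod.swap x) = return_pmf (prod.swap x)" if "x \<in> diff_label lab" for x
    using assms that unfolding policies_def by (cases x) (auto simp: diff_label_def)
  ultimately show ?thesis
    by (auto simp: policies_def swap_coupling)
qed

lemma reach_within_swap:
  "reach_within (\<lambda>x. map_pmf prod.swap (P (prod.swap x))) diag_pairs n x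
     = reach_within P diag_pairs n (prod.swap x)"
proof -
  have swap_diag: "prod.swap x \<in> diag_pairs \<longleftrightarrow> x \<in> diag_pairs" for x :: "'a \<times> 'a"
    by (cases x) (auto simp: diag_pairs_def)
  show ?thesis
    by (induction n arbitrary: x) (simp_all add: swap_diag)
qed

lemma robust_bisimilarity_iff:
  "x \<in> robust_bisimilarity \<tau> lab \<longleftrightarrow> (\<exists>P\<in>policies \<tau> lab. reaches_almost_surely P diag_pairs x)"
  by (cases x) (simp add: robust_bisimilarity_def)

lemma robust_bisimilarity_sym:
  assumes "(s, t) \<in> robust_bisimilarity \<tau> lab"
  shows "(t, s) \<in> robust_bisimilarity \<tau> lab"
proof -
  obtain P where "P \<in> policies \<tau> lab" and "reaches_almost_surely P diag_pairs (s, t)"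
    using assms by (auto simp: robust_bisimilarity_iff)
  then show ?thesis
    unfolding robust_bisimilarity_iff
    by (auto simp: reaches_almost_surely_def reach_within_swap intro!: bexI[OF _ swap_policy])
qed

lemma robust_bisimilarity_successors:
  fixes \<tau> :: "'s::finite \<Rightarrow> 's pmf"
  assumes "P \<in> policies \<tau> lab" and "reaches_almost_surely P diag_pairs x" and "x \<notin> diag_pairs"
  shows "set_pmf (P x) \<subseteq> robust_bisimilarity \<tau> lab"
  using assms reaches_almost_surely_successor robust_bisimilarity_iff by blast

inductive_set diag_reachable :: "('s \<Rightarrow> 's pmf) \<Rightarrow> ('s \<times> 's) set \<Rightarrow> ('s \<times> 's) set"
  for \<tau> R where
  diag: "(a, a) \<in> diag_reachable \<tau> R"
| coupling_step: "(s, t) \<in> R \<Longrightarrow> \<omega> \<in> couplings (\<tau> s) (\<tau> t) \<Longrightarrow> set_pmf \<omega> \<subseteq> R \<Longrightarrow>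
    (s', t') \<in> set_pmf \<omega> \<Longrightarrow> (s', t') \<in> diag_reachable \<tau> R \<Longrightarrow> (s, t) \<in> diag_reachable \<tau> R"

lemma filter_rel_iff:
  "x \<in> filter_rel \<tau> lab R \<longleftrightarrow> x \<in> R \<and> (\<exists>P\<in>policies \<tau> lab. \<exists>xs.
      is_path P xs \<and> hd xs = x \<and> last xs \<in> diag_pairs \<and> supports_path R P xs)"
  by (cases x) (simp add: filter_rel_def)

context
  fixes \<tau> :: "'s::finite \<Rightarrow> 's pmf" and lab :: "'s \<Rightarrow> 'l" and R :: "('s \<times> 's) set"
  assumes bisim: "bisimulation \<tau> lab R"
begin

lemma bisim_refl: "(a, a) \<in> R"
  using bisim unfolding bisimulation_def equiv_def by (auto dest: refl_onD)

lemma bisim_sym: "(a, b) \<in> R \<Longrightarrow> (b, a) \<in> R"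
  using bisim unfolding bisimulation_def equiv_def by (auto dest: symD)

lemma bisim_trans: "(a, b) \<in> R \<Longrightarrow> (b, c) \<in> R \<Longrightarrow> (a, c) \<in> R"
  using bisim unfolding bisimulation_def equiv_def by (auto dest: transD)

lemma bisim_same_label: "(a, b) \<in> R \<Longrightarrow> (a, b) \<notin> diff_label lab"
  using bisim unfolding bisimulation_def diff_label_def by auto

lemma diag_reachable_imp_filter_rel:
  "(s, t) \<in> diag_reachable \<tau> R \<Longrightarrow> (s, t) \<in> filter_rel \<tau> lab R"
proof (induction rule: diag_reachable.induct)
  case (diag a)
  obtain P where "P \<in> policies \<tau> lab" using policies_nonempty by blast
  define P' where "P' = P((a, a) := map_pmf (\<lambda>b. (b, b)) (\<tau> a))"
  have "P' \<in> policies \<tau> lab"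
    unfolding P'_def using \<open>P \<in> policies \<tau> lab\<close>
    by (rule policy_update) (auto simp: diff_label_def diagonal_coupling)
  moreover have "supports_path R P' [(a, a)]"
    by (auto simp: supports_path_def P'_def bisim_refl)
  ultimately show ?case
    using bisim_refl
    by (auto simp: filter_rel_def is_path_def diag_pairs_def intro!: bexI[of _ P'] exI[of _ "[(a, a)]"])
next
  case (coupling_step s t \<omega> s' t')
  obtain P xs where P: "P \<in> policies \<tau> lab" and xs: "is_path P xs" "hd xs = (s', t')"
      "last xs \<in> diag_pairs" "supports_path R P xs"
    using coupling_step.IH by (auto simp: filter_rel_def)
  show ?case
  proof (cases "(s, t) \<in> set xs")
    case True
    then obtain i where i: "i < length xs" "xs ! i = (s, t)" by (auto simp: in_set_conv_nth)
    have "is_path P (drop i xs)" "hd (drop i xs) = (s, t)" "last (drop i xs) \<in> diag_pairs"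
      using is_path_drop[OF xs(1) i(1)] i xs(3) by (auto simp: hd_drop_conv_nth)
    moreover have "supports_path R P (drop i xs)"
      using xs(4) set_drop_subset[of i xs] unfolding supports_path_def by blast
    ultimately show ?thesis
      using P coupling_step.hyps(1) by (auto simp: filter_rel_def)
  next
    case False
    define P' where "P' = P((s, t) := \<omega>)"
    have agree: "\<And>z. z \<in> set xs \<Longrightarrow> P' z = P z" using False by (auto simp: P'_def)
    have "P' \<in> policies \<tau> lab"
      unfolding P'_def using P bisim_same_label[OF coupling_step.hyps(1)] coupling_step.hyps(2)
      by (rule policy_update)
    moreover have "is_path P' ((s, t) # xs)"
    proof -
      have "is_path P' xs" using xs(1) is_path_cong[OF agree] by simp
      moreover have "hd xs \<in> set_pmf (P' (s, t))" using xs(2) coupling_step.hyps(4) by (simp add: P'_def)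
      ultimately show ?thesis by (simp add: is_path_Cons)
    qed
    moreover have "supports_path R P' ((s, t) # xs)"
      using xs(4) supports_path_cong[OF agree] coupling_step.hyps(1,3)
      by (simp add: supports_path_def P'_def)
    moreover have "last ((s, t) # xs) \<in> diag_pairs"
      using xs(1,3) by (simp add: is_path_def)
    ultimately show ?thesis
      using coupling_step.hyps(1) unfolding filter_rel_def by fastforce
  qed
qed

lemma supported_path_diag_reachable:
  assumes "P \<in> policies \<tau> lab"
  shows "is_path P xs \<Longrightarrow> last xs \<in> diag_pairs \<Longrightarrow> supports_path R P xs \<Longrightarrow>
    hd xs \<in> diag_reachable \<tau> R"
proof (induction xs)
  case Nil
  then show ?case by (simp add: is_path_def)
next
  case (Cons x xs)
  obtain s t where x: "x = (s, t)" by fastforce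
  show ?case
  proof (cases "xs = []")
    case True
    then show ?thesis using Cons.prems(2) by (auto simp: diag_pairs_def intro: diag_reachable.diag)
  next
    case False
    obtain s' t' where y: "hd xs = (s', t')" by fastforce
    have "(s', t') \<in> set_pmf (P (s, t))" "(s', t') \<in> diag_reachable \<tau> R"
      using Cons False by (auto simp: is_path_Cons supports_path_def x y)
    moreover have st: "(s, t) \<in> R" and "set_pmf (P (s, t)) \<subseteq> R"
      using Cons.prems(3) by (auto simp: supports_path_def x)
    ultimately show ?thesis
      using diag_reachable.coupling_step[OF st policy_coupling[OF assms bisim_same_label[OF st]]]
      by (simp add: x)
  qed
qed

lemma filter_rel_eq_diag_reachable: "filter_rel \<tau> lab R = diag_reachable \<tau> R"
proof
  show "filter_rel \<tau> lab R \<subseteq> diag_reachable \<tau> R"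
  proof
    fix x assume "x \<in> filter_rel \<tau> lab R"
    then obtain P xs where "P \<in> policies \<tau> lab" "is_path P xs" "hd xs = x" "last xs \<in> diag_pairs"
        "supports_path R P xs"
      by (auto simp: filter_rel_iff)
    then show "x \<in> diag_reachable \<tau> R"
      using supported_path_diag_reachable by blast
  qed
  show "diag_reachable \<tau> R \<subseteq> filter_rel \<tau> lab R"
    using diag_reachable_imp_filter_rel by auto
qed

lemma diag_reachable_sym: "(s, t) \<in> diag_reachable \<tau> R \<Longrightarrow> (t, s) \<in> diag_reachable \<tau> R"
proof (induction rule: diag_reachable.induct)
  case (diag a)
  then show ?case by (rule diag_reachable.diag)
next
  case (coupling_step s t \<omega> s' t')
  have "set_pmf (map_pmf prod.swap \<omega>) \<subseteq> R"
    using coupling_step.hyps(3) bisim_sym by auto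
  moreover have "(t', s') \<in> set_pmf (map_pmf prod.swap \<omega>)"
    using coupling_step.hyps(4) by force
  ultimately show ?case
    using diag_reachable.coupling_step[OF bisim_sym[OF coupling_step.hyps(1)]
        swap_coupling[OF coupling_step.hyps(2)]] coupling_step.IH
    by blast
qed


context
  assumes robust_sub: "robust_bisimilarity \<tau> lab \<subseteq> R"
begin

lemma robust_bisimilarity_subset_diag_reachable:
  "robust_bisimilarity \<tau> lab \<subseteq> diag_reachable \<tau> R"
proof
  fix x assume "x \<in> robust_bisimilarity \<tau> lab"
  then obtain P where P: "P \<in> policies \<tau> lab" and reach: "reaches_almost_surely P diag_pairs x"
    by (auto simp: robust_bisimilarity_iff)
  from reach show "x \<in> diag_reachable \<tau> R"
  proof (induction rule: reaches_almost_surely_induct)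
    case (target z)
    then show ?case by (auto simp: diag_pairs_def intro: diag_reachable.diag)
  next
    case (step z y)
    obtain s t where z: "z = (s, t)" by fastforce
    obtain s' t' where y: "y = (s', t')" by fastforce
    have st: "(s, t) \<in> R"
      using step.hyps(1) P robust_sub robust_bisimilarity_iff z by blast
    have "set_pmf (P (s, t)) \<subseteq> R"
      using robust_bisimilarity_successors[OF P step.hyps(1,2)] robust_sub z by auto
    then show ?case
      using diag_reachable.coupling_step[OF st policy_coupling[OF P bisim_same_label[OF st]]]
        step.hyps(3) step.IH
      unfolding z y by blast
  qed
qed

lemma diag_reachable_robust_left:
  "(t, u) \<in> diag_reachable \<tau> R \<Longrightarrow> (s, t) \<in> robust_bisimilarity \<tau> lab \<Longrightarrow>
    (s, u) \<in> diag_reachable \<tau> R"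
proof (induction arbitrary: s rule: diag_reachable.induct)
  case (diag a)
  then show ?case using robust_bisimilarity_subset_diag_reachable by blast
next
  case (coupling_step t u \<omega> t' u')
  show ?case
  proof (cases "s = t")
    case True
    then show ?thesis using diag_reachable.coupling_step[OF coupling_step.hyps] by simp
  next
    case False
    obtain P where P: "P \<in> policies \<tau> lab" and reach: "reaches_almost_surely P diag_pairs (s, t)"
      using coupling_step.prems by (auto simp: robust_bisimilarity_iff)
    have st: "(s, t) \<in> R" using coupling_step.prems robust_sub by blast
    have cpl: "P (s, t) \<in> couplings (\<tau> s) (\<tau> t)"
      using policy_coupling[OF P bisim_same_label[OF st]] .
    have succ: "set_pmf (P (s, t)) \<subseteq> robust_bisimilarity \<tau> lab"
      using robust_bisimilarity_successors[OF P reach] False by (simp add: diag_pairs_def)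
    obtain \<omega>' where \<omega>': "\<omega>' \<in> couplings (\<tau> s) (\<tau> u)"
        "set_pmf \<omega>' = set_pmf (P (s, t)) O set_pmf \<omega>"
      using couplings_relcomp[OF cpl coupling_step.hyps(2)] .
    have "t' \<in> set_pmf (\<tau> t)"
      using set_pmf_couplings(1)[OF coupling_step.hyps(2)] coupling_step.hyps(4) by force
    then obtain s'' where s'': "(s'', t') \<in> set_pmf (P (s, t))"
      using set_pmf_couplings(2)[OF cpl] by force
    have "set_pmf \<omega>' \<subseteq> R"
    proof
      fix x assume "x \<in> set_pmf \<omega>'"
      then obtain a b c where x: "x = (a, c)" and "(a, b) \<in> set_pmf (P (s, t))" "(b, c) \<in> set_pmf \<omega>"
        using \<omega>'(2) by blast
      then have "(a, b) \<in> R" "(b, c) \<in> R"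
        using succ robust_sub coupling_step.hyps(3) by auto
      then show "x \<in> R" unfolding x by (rule bisim_trans)
    qed
    moreover have "(s'', u') \<in> set_pmf \<omega>'"
      using \<omega>'(2) s'' coupling_step.hyps(4) by blast
    moreover have "(s'', u') \<in> diag_reachable \<tau> R"
      using coupling_step.IH s'' succ by blast
    moreover have "(s, u) \<in> R"
      using bisim_trans[OF st coupling_step.hyps(1)] .
    ultimately show ?thesis
      using diag_reachable.coupling_step[OF _ \<omega>'(1)] by blast
  qed
qed

lemma diag_reachable_robust_right:
  assumes "(s, t) \<in> diag_reachable \<tau> R" and "(t, u) \<in> robust_bisimilarity \<tau> lab"
  shows "(s, u) \<in> diag_reachable \<tau> R"
  using diag_reachable_robust_left[OF diag_reachable_sym[OF assms(1)] robust_bisimilarity_sym[OF assms(2)]]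
  by (rule diag_reachable_sym)

end

end

theorem proposition7:
  fixes \<tau> :: "'s::finite \<Rightarrow> 's pmf" and lab :: "'s \<Rightarrow> 'l" and R :: "('s \<times> 's) set"
    and s t u :: 's
  assumes "card (range lab) \<ge> 2"
    and "bisimulation \<tau> lab R"
    and "robust_bisimilarity \<tau> lab \<subseteq> R" and "R \<subseteq> bisimilarity \<tau> lab"
    and "(s,t) \<in> filter_rel \<tau> lab R" and "(t,u) \<in> filter_rel \<tau> lab R"
    and "(s,t) \<in> robust_bisimilarity \<tau> lab \<or> (t,u) \<in> robust_bisimilarity \<tau> lab"
  shows "(s,u) \<in> filter_rel \<tau> lab R"
proof -
  note filter_eq = filter_rel_eq_diag_reachable[OF assms(2)]
  from assms(7) have "(s, u) \<in> diag_reachable \<tau> R"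
  proof
    assume "(s, t) \<in> robust_bisimilarity \<tau> lab"
    then show ?thesis
      using diag_reachable_robust_left[OF assms(2,3)] assms(6) filter_eq by blast
  next
    assume "(t, u) \<in> robust_bisimilarity \<tau> lab"
    then show ?thesis
      using diag_reachable_robust_right[OF assms(2,3)] assms(5) filter_eq by blast
  qed
  then show ?thesis using filter_eq by simp
qed

end
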